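(* Let $A_R$ be a calibrated $R$-superalgebra with basis $B^A$ and let $e\in\mathfrak a_R$ be an idempotent such that $be=b$ or $be=0$ for every $b\in B^A$. Then $\tilde\Gamma^d(\mathrm{Col}_n(A_Re))\simeq T^A(n,d)_R\,\eta^{e^d}_{1^d,1^d}$ (even isomorphism of left $T^A(n,d)_R$-supermodules), where $\eta^{e^d}_{1^d,1^d}=(\xi^e_{1,1})^{\otimes d}$.
   Context: Let $R$ be a principal ideal domain of characteristic $0$. A calibrated $R$-supermodule is a free finite-rank $R$-supermodule $V$ with a decomposition $V_{\bar0}=V_{\mathfrak a}\oplus V_{\mathfrak c}$ into free submodules; with bases $B_{\mathfrak a},B_{\mathfrak c},B_{\bar1}$ and a total order on their union $B$, $\mathfrak S_d$ acts on $V^{\otimes d}$ by $(v_1\otimes\cdots\otimes v_d)^\sigma=(-1)^{\langle\sigma;\mathbf v\rangle}v_{\sigma1}\otimes\cdots\otimes v_{\sigma d}$ ($\langle\sigma;\mathbf v\rangle$ = number of $k<l$ with $\sigma^{-1}k>\sigma^{-1}l$, $v_k,v_l$ odd); for a $d$-tuple $\mathbf b$ of basis elements in which only even ones repeat, $y_{\mathbf b}=\prod_{b\in B_{\mathfrak c}}\#\{k:b_k=b\}!\cdot\sum_{\mathbf b'}(-1)^{\langle\mathbf b\rangle+\langle\mathbf b'\rangle}b'_1\otimes\cdots\otimes b'_d$ (sum over distinct place-permutations $\mathbf b'$; $\langle\mathbf b\rangle$ = number of $k<l$ with $b_k,b_l$ odd, $b_k>b_l$), and $\tilde\Gamma^dV=\mathrm{span}_R\{y_{\mathbf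 b}\}$. A calibrated $R$-superalgebra is a free finite-rank $R$-superalgebra $A_R$ with $A_{R,\bar0}=\mathfrak a_R\oplus\mathfrak c_R$ (free), $\mathfrak a_R$ a unital subalgebra, with bases $B^A_{\mathfrak a},B^A_{\mathfrak c},B^A_{\bar1}$, $B^A$ their union. $M_n(A_R)$ is the matrix superalgebra with basis $\xi^b_{r,s}$ ($b\in B^A$ in position $(r,s)$), calibrated by $M_n(\mathfrak a_R)$, $M_n(\mathfrak c_R)$; $T^A(n,d)_R=\tilde\Gamma^dM_n(A_R)$, a unital subsuperalgebra of $M_n(A_R)^{\otimes d}$ (Koszul sign product). For a calibrated $A_R$-supermodule $V$ (i.e. $\mathfrak a_RV_{\mathfrak a}\subseteq V_{\mathfrak a}$), $\mathrm{Col}_n(V)=V^{\oplus n}$ (column vectors) is a left $M_n(A_R)$-supermodule, calibrated by $\mathrm{Col}_n(V_{\mathfrak a})$, $\mathrm{Col}_n(V_{\mathfrak c})$, and $\tilde\Gamma^d\mathrm{Col}_n(V)$ is a left $T^A(n,d)_R$-supermodule via the natural (Koszul-signed) action of $M_n(A_R)^{\otimes d}$ on $\mathrm{Col}_n(V)^{\otimes d}$. Here $A_Re$ is calibrated with $(A_Re)_{\mathfrak a}=\mathfrak a_Re$, $(A_Re)_{\mathfrak c}=\mathfrak c_Re$. *)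

theory Defs
  imports Main "HOL-Library.Multiset" "HOL-Library.Product_Lexorder"
begin

definition is_ideal :: "'r::comm_ring_1 set \<Rightarrow> bool" where
  "is_ideal I \<longleftrightarrow> 0 \<in> I \<and> (\<forall>x\<in>I. \<forall>y\<in>I. x + y \<in> I) \<and> (\<forall>x\<in>I. \<forall>r. r * x \<in> I)"

definition principal_ideal_ring :: "'r::comm_ring_1 itself \<Rightarrow> bool" where
  "principal_ideal_ring _ \<longleftrightarrow> (\<forall>I::'r set. is_ideal I \<longrightarrow> (\<exists>a. I = {r * a | r. True}))"

section \<open>Calibrated superalgebras in coordinates (basis B^A = Ba \<union> Bc \<union> B1, structure constants m)\<close>

definition bvec :: "'b \<Rightarrow> 'b \<Rightarrow> 'r::zero_neq_one" where
  "bvec b = (\<lambda>c. if c = b then 1 else 0)"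

definition amul :: "'b set \<Rightarrow> ('b \<Rightarrow> 'b \<Rightarrow> 'b \<Rightarrow> 'r::comm_ring_1) \<Rightarrow> ('b \<Rightarrow> 'r) \<Rightarrow> ('b \<Rightarrow> 'r) \<Rightarrow> ('b \<Rightarrow> 'r)" where
  "amul BA m x y = (\<lambda>c. \<Sum>a\<in>BA. \<Sum>b\<in>BA. x a * y b * m a b c)"

definition calibrated_superalgebra ::
  "'b set \<Rightarrow> 'b set \<Rightarrow> 'b set \<Rightarrow> ('b \<Rightarrow> 'b \<Rightarrow> 'b \<Rightarrow> 'r::comm_ring_1) \<Rightarrow> ('b \<Rightarrow> 'r) \<Rightarrow> bool" where
  "calibrated_superalgebra Ba Bc B1 m one \<longleftrightarrow>
     finite (Ba \<union> Bc \<union> B1) \<and> Ba \<inter> Bc = {} \<and> Ba \<inter> B1 = {} \<and> Bc \<inter> B1 = {} \<and>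
     (\<forall>a\<in>Ba \<union> Bc \<union> B1. \<forall>b\<in>Ba \<union> Bc \<union> B1. \<forall>c. m a b c \<noteq> 0 \<longrightarrow>
         c \<in> Ba \<union> Bc \<union> B1 \<and> (c \<in> B1 \<longleftrightarrow> (a \<in> B1 \<longleftrightarrow> b \<notin> B1))) \<and>
     (\<forall>a\<in>Ba \<union> Bc \<union> B1. \<forall>b\<in>Ba \<union> Bc \<union> B1. \<forall>c\<in>Ba \<union> Bc \<union> B1.
         amul (Ba \<union> Bc \<union> B1) m (amul (Ba \<union> Bc \<union> B1) m (bvec a) (bvec b)) (bvec c)
       = amul (Ba \<union> Bc \<union> B1) m (bvec a) (amul (Ba \<union> Bc \<union> B1) m (bvec b) (bvec c))) \<and>
     (\<forall>b\<in>Ba \<union> Bc \<union> B1. amul (Ba \<union> Bc \<union> B1) m one (bvec b) = bvec b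
                        \<and> amul (Ba \<union> Bc \<union> B1) m (bvec b) one = bvec b) \<and>
     (\<forall>c. c \<notin> Ba \<longrightarrow> one c = 0) \<and>
     (\<forall>a\<in>Ba. \<forall>b\<in>Ba. \<forall>c. m a b c \<noteq> 0 \<longrightarrow> c \<in> Ba)"

section \<open>Tensor powers in coordinates: an element of V^{\<otimes>d} is a function on d-tuples (lists) of basis elements\<close>

definition lists_of :: "'x set \<Rightarrow> nat \<Rightarrow> 'x list set" where
  "lists_of X d = {xs. set xs \<subseteq> X \<and> length xs = d}"

definition inv_count :: "('x::linorder \<Rightarrow> bool) \<Rightarrow> 'x list \<Rightarrow> nat" where
  "inv_count pr bs = card {(k, l). k < l \<and> l < length bs \<and> pr (bs ! k) \<and> pr (bs ! l) \<and> bs ! k > bs ! l}"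

definition admissible :: "('x \<Rightarrow> bool) \<Rightarrow> 'x set \<Rightarrow> nat \<Rightarrow> 'x list \<Rightarrow> bool" where
  "admissible pr X d bs \<longleftrightarrow> bs \<in> lists_of X d \<and>
     (\<forall>k<d. \<forall>l<d. k \<noteq> l \<and> pr (bs ! k) \<longrightarrow> bs ! k \<noteq> bs ! l)"

text \<open>pr = "is odd", isc = "lies in B_c".\<close>
definition yvec :: "('x::linorder \<Rightarrow> bool) \<Rightarrow> ('x \<Rightarrow> bool) \<Rightarrow> 'x list \<Rightarrow> 'x list \<Rightarrow> 'r::comm_ring_1" where
  "yvec pr isc bs = (\<lambda>bs'. if mset bs' = mset bs
      then of_nat (\<Prod>b\<in>{b\<in>set bs. isc b}. fact (count (mset bs) b))
           * (-1) ^ (inv_count pr bs + inv_count pr bs')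
      else 0)"

definition Gamma_tilde :: "('x::linorder \<Rightarrow> bool) \<Rightarrow> ('x \<Rightarrow> bool) \<Rightarrow> 'x set \<Rightarrow> nat \<Rightarrow> ('x list \<Rightarrow> 'r::comm_ring_1) set" where
  "Gamma_tilde pr isc X d =
     {(\<lambda>w. \<Sum>bs\<in>{bs. admissible pr X d bs}. c bs * yvec pr isc bs w) | c. True}"

definition ksign :: "('x \<Rightarrow> bool) \<Rightarrow> ('y \<Rightarrow> bool) \<Rightarrow> 'x list \<Rightarrow> 'y list \<Rightarrow> 'r::comm_ring_1" where
  "ksign p q xs ys = (-1) ^ card {(l, k). l < k \<and> k < length xs \<and> p (xs ! k) \<and> q (ys ! l)}"

definition homog :: "('x \<Rightarrow> bool) \<Rightarrow> bool \<Rightarrow> ('x list \<Rightarrow> 'r::zero) \<Rightarrow> bool" where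
  "homog pr p x \<longleftrightarrow> (\<forall>w. x w \<noteq> 0 \<longrightarrow> odd (length (filter pr w)) = p)"

section \<open>Matrix superalgebra M_n(A): basis xi^b_{r,s} = (b,r,s); column module Col_n(V): basis (b,r)\<close>

definition Mbasis :: "'b set \<Rightarrow> nat \<Rightarrow> ('b \<times> nat \<times> nat) set" where
  "Mbasis BA n = {(b, r, s). b \<in> BA \<and> r \<in> {1..n} \<and> s \<in> {1..n}}"

definition oddM :: "'b set \<Rightarrow> 'b \<times> nat \<times> nat \<Rightarrow> bool" where
  "oddM B1 = (\<lambda>(a, _, _). a \<in> B1)"

definition oddC :: "'b set \<Rightarrow> 'b \<times> nat \<Rightarrow> bool" where
  "oddC B1 = (\<lambda>(a, _). a \<in> B1)"

definition TA :: "'b::linorder set \<Rightarrow> 'b set \<Rightarrow> 'b set \<Rightarrow> nat \<Rightarrow> nat \<Rightarrow> (('b \<times> nat \<times> nat) list \<Rightarrow> 'r::comm_ring_1) set" where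
  "TA Ba Bc B1 n d = Gamma_tilde (oddM B1) (\<lambda>(a, _, _). a \<in> Bc) (Mbasis (Ba \<union> Bc \<union> B1) n) d"

text \<open>Koszul-signed product in M_n(A)^{\<otimes>d}\<close>
definition Mtensor_mul ::
  "'b set \<Rightarrow> 'b set \<Rightarrow> ('b \<Rightarrow> 'b \<Rightarrow> 'b \<Rightarrow> 'r::comm_ring_1) \<Rightarrow> nat \<Rightarrow> nat
   \<Rightarrow> (('b \<times> nat \<times> nat) list \<Rightarrow> 'r) \<Rightarrow> (('b \<times> nat \<times> nat) list \<Rightarrow> 'r) \<Rightarrow> (('b \<times> nat \<times> nat) list \<Rightarrow> 'r)" where
  "Mtensor_mul BA B1 m n d X Y = (\<lambda>ws. if length ws = d then
     (\<Sum>xs\<in>lists_of (Mbasis BA n) d. \<Sum>ys\<in>lists_of (Mbasis BA n) d.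
        X xs * Y ys * ksign (oddM B1) (oddM B1) xs ys *
        (\<Prod>k<d. case (xs ! k, ys ! k, ws ! k) of ((a, r, s), (a', r', s'), (c, r'', s'')) \<Rightarrow>
            if s = r' \<and> r'' = r \<and> s'' = s' then m a a' c else 0))
     else 0)"

text \<open>Koszul-signed action of M_n(A)^{\<otimes>d} on Col_n(A)^{\<otimes>d}\<close>
definition col_act ::
  "'b set \<Rightarrow> 'b set \<Rightarrow> ('b \<Rightarrow> 'b \<Rightarrow> 'b \<Rightarrow> 'r::comm_ring_1) \<Rightarrow> nat \<Rightarrow> nat
   \<Rightarrow> (('b \<times> nat \<times> nat) list \<Rightarrow> 'r) \<Rightarrow> (('b \<times> nat) list \<Rightarrow> 'r) \<Rightarrow> (('b \<times> nat) list \<Rightarrow> 'r)" where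
  "col_act BA B1 m n d X Y = (\<lambda>ws. if length ws = d then
     (\<Sum>xs\<in>lists_of (Mbasis BA n) d. \<Sum>vs\<in>lists_of (BA \<times> {1..n}) d.
        X xs * Y vs * ksign (oddM B1) (oddC B1) xs vs *
        (\<Prod>k<d. case (xs ! k, vs ! k, ws ! k) of ((a, r, s), (b, t), (c, r')) \<Rightarrow>
            if s = t \<and> r' = r then m a b c else 0))
     else 0)"

text \<open>Basis of Col_n(A_R e) under the hypothesis b e \<in> {b, 0}: pairs (b,r) with b e = b.
  Calibration: (b,r) is in the a-part iff b \<in> Ba, in the c-part iff b \<in> Bc, odd iff b \<in> B1.\<close>
definition ColE_basis :: "'b set \<Rightarrow> ('b \<Rightarrow> 'b \<Rightarrow> 'b \<Rightarrow> 'r::comm_ring_1) \<Rightarrow> ('b \<Rightarrow> 'r) \<Rightarrow> nat \<Rightarrow> ('b \<times> nat) set" where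
  "ColE_basis BA m e n = {(b, r). b \<in> BA \<and> amul BA m (bvec b) e = bvec b \<and> r \<in> {1..n}}"

definition GammaColE :: "'b::linorder set \<Rightarrow> 'b set \<Rightarrow> 'b set \<Rightarrow> ('b \<Rightarrow> 'b \<Rightarrow> 'b \<Rightarrow> 'r::comm_ring_1) \<Rightarrow> ('b \<Rightarrow> 'r) \<Rightarrow> nat \<Rightarrow> nat
   \<Rightarrow> (('b \<times> nat) list \<Rightarrow> 'r) set" where
  "GammaColE Ba Bc B1 m e n d =
     Gamma_tilde (oddC B1) (\<lambda>(a, _). a \<in> Bc) (ColE_basis (Ba \<union> Bc \<union> B1) m e n) d"

definition eta_e :: "('b \<Rightarrow> 'r::comm_ring_1) \<Rightarrow> nat \<Rightarrow> ('b \<times> nat \<times> nat) list \<Rightarrow> 'r" where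
  "eta_e e d = (\<lambda>ms. if length ms = d then
      (\<Prod>k<d. case ms ! k of (b, r, s) \<Rightarrow> if r = 1 \<and> s = 1 then e b else 0) else 0)"

definition even_iso_Tmod ::
  "('b \<times> nat \<times> nat \<Rightarrow> bool) \<Rightarrow> ('b \<times> nat \<Rightarrow> bool)
   \<Rightarrow> (('b \<times> nat \<times> nat) list \<Rightarrow> 'r::comm_ring_1) set
   \<Rightarrow> ((('b \<times> nat \<times> nat) list \<Rightarrow> 'r) \<Rightarrow> (('b \<times> nat) list \<Rightarrow> 'r) \<Rightarrow> (('b \<times> nat) list \<Rightarrow> 'r))
   \<Rightarrow> ((('b \<times> nat \<times> nat) list \<Rightarrow> 'r) \<Rightarrow> (('b \<times> nat \<times> nat) list \<Rightarrow> 'r) \<Rightarrow> (('b \<times> nat \<times> nat) list \<Rightarrow> 'r))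
   \<Rightarrow> (('b \<times> nat) list \<Rightarrow> 'r) set \<Rightarrow> (('b \<times> nat \<times> nat) list \<Rightarrow> 'r) set
   \<Rightarrow> ((('b \<times> nat) list \<Rightarrow> 'r) \<Rightarrow> (('b \<times> nat \<times> nat) list \<Rightarrow> 'r)) \<Rightarrow> bool" where
  "even_iso_Tmod prM prC T act1 act2 V W f \<longleftrightarrow>
     bij_betw f V W \<and>
     (\<forall>x\<in>V. \<forall>y\<in>V. f (\<lambda>w. x w + y w) = (\<lambda>w. f x w + f y w)) \<and>
     (\<forall>c. \<forall>x\<in>V. f (\<lambda>w. c * x w) = (\<lambda>w. c * f x w)) \<and>
     (\<forall>t\<in>T. \<forall>x\<in>V. f (act1 t x) = act2 t (f x)) \<and>
     (\<forall>p. \<forall>x\<in>V. homog prC p x \<longrightarrow> homog prM p (f x))"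

end

(* Sending the basis vector (b, r) of Col_n(A_R e) to the matrix unit \<xi>^b_{r,1} embeds Col_n(A_R e)
   as the first column of M_n(A_R). The embedding respects parity, calibration and the order of the
   bases, and it commutes with left multiplication by M_n(A_R), because the product of a matrix with a
   matrix supported in the first column is again supported there. Its d-th tensor power f therefore
   intertwines the actions of T^A(n,d)_R and sends each y_b to the corresponding y_b' of M_n(A_R), so
   f maps \<Gamma>~^d Col_n(A_R e) onto the restrictions of elements of \<Gamma>~^d M_n(A_R) to tensors of matrix
   units \<xi>^b_{r,1} with b e = b. Right multiplication by \<eta> = (\<xi>^e_{1,1})^{\<otimes>d} is precisely this
   restriction: \<xi>^b_{r,s} \<xi>^e_{1,1} = \<delta>_{s,1} (b e)_{r,1} with b e \<in> {b, 0}, and since e is even no Koszul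
   signs occur. *)

theory Submission
  imports Defs
begin

section \<open>Tensors pushed forward along a basis embedding\<close>

(* The d-th tensor power of the linear map sending the basis vector v to f v. *)
definition push_tensor :: "('x \<Rightarrow> 'y) \<Rightarrow> ('x list \<Rightarrow> 'r::zero) \<Rightarrow> 'y list \<Rightarrow> 'r" where
  "push_tensor f x = (\<lambda>ws. if set ws \<subseteq> range f then x (map (inv f) ws) else 0)"

lemma push_tensor_map [simp]: "inj f \<Longrightarrow> push_tensor f x (map f vs) = x vs"
  by (auto simp: push_tensor_def)

lemma push_tensor_outside: "\<not> set ws \<subseteq> range f \<Longrightarrow> push_tensor f x ws = 0"
  by (simp add: push_tensor_def)

lemma push_tensor_add:
  fixes x y :: "'x list \<Rightarrow> 'r::monoid_add"
  shows "push_tensor f (\<lambda>w. x w + y w) = (\<lambda>w. push_tensor f x w + push_tensor f y w)"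
  by (simp add: push_tensor_def fun_eq_iff)

lemma push_tensor_smult:
  fixes x :: "'x list \<Rightarrow> 'r::mult_zero"
  shows "push_tensor f (\<lambda>w. c * x w) = (\<lambda>w. c * push_tensor f x w)"
  by (simp add: push_tensor_def fun_eq_iff)

lemma ex_map_if_set_subset_range: "set ws \<subseteq> range f \<Longrightarrow> \<exists>vs. ws = map f vs"
  by (auto simp: ex_map_conv)

lemma inj_push_tensor:
  assumes "inj f"
  shows "inj (push_tensor f)"
proof (rule injI, rule ext)
  fix x y vs
  assume "push_tensor f x = push_tensor f y"
  then have "push_tensor f x (map f vs) = push_tensor f y (map f vs)" by simp
  with assms show "x vs = y vs" by simp
qed

lemma homog_push_tensor:
  assumes "homog pr p x" and "pr' \<circ> f = pr" and "inj f"
  shows "homog pr' p (push_tensor f x)"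
  unfolding homog_def
proof (intro allI impI)
  fix ws assume nz: "push_tensor f x ws \<noteq> 0"
  then have "set ws \<subseteq> range f" by (meson push_tensor_outside)
  then obtain vs where ws: "ws = map f vs" using ex_map_if_set_subset_range by blast
  with nz assms(3) have "x vs \<noteq> 0" by simp
  with assms(1) have "odd (length (filter pr vs)) = p" by (simp add: homog_def)
  with ws assms(2) show "odd (length (filter pr' ws)) = p" by (simp add: filter_map)
qed

lemma finite_lists_of: "finite X \<Longrightarrow> finite (lists_of X d)"
  unfolding lists_of_def by (rule finite_lists_length_eq)

lemma lists_of_Suc: "lists_of X (Suc d) = (\<lambda>(y, ys). y # ys) ` (X \<times> lists_of X d)"
  by (auto simp: lists_of_def image_iff length_Suc_conv)

lemma sum_lists_of_prod:
  assumes "finite X"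
  shows "(\<Sum>ys\<in>lists_of X d. \<Prod>k<d. h k (ys ! k)) = (\<Prod>k<d. \<Sum>y\<in>X. (h k y :: 'r::comm_semiring_1))"
proof (induction d arbitrary: h)
  case 0
  have "lists_of X 0 = {[]}" by (auto simp: lists_of_def)
  then show ?case by simp
next
  case (Suc d)
  have inj: "inj_on (\<lambda>(y, ys). y # ys) (X \<times> lists_of X d)" by (auto simp: inj_on_def)
  have "(\<Sum>ys\<in>lists_of X (Suc d). \<Prod>k<Suc d. h k (ys ! k))
      = (\<Sum>(y, ys)\<in>X \<times> lists_of X d. h 0 y * (\<Prod>k<d. h (Suc k) (ys ! k)))"
    unfolding lists_of_Suc sum.reindex[OF inj]
    by (simp add: prod.lessThan_Suc_shift case_prod_beta del: prod.lessThan_Suc)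
  also have "\<dots> = (\<Sum>y\<in>X. h 0 y) * (\<Sum>ys\<in>lists_of X d. \<Prod>k<d. h (Suc k) (ys ! k))"
    by (simp add: sum_product sum.cartesian_product)
  also have "\<dots> = (\<Sum>y\<in>X. h 0 y) * (\<Prod>k<d. \<Sum>y\<in>X. h (Suc k) y)"
    using Suc[of "\<lambda>k. h (Suc k)"] by simp
  finally show ?case by (simp add: prod.lessThan_Suc_shift del: prod.lessThan_Suc)
qed

lemma prod_of_bool: "finite A \<Longrightarrow> (\<Prod>x\<in>A. of_bool (P x) :: 'r::comm_semiring_1) = of_bool (\<forall>x\<in>A. P x)"
  by (induction A rule: finite_induct) auto

lemma sum_lists_of_push_tensor:
  fixes x :: "'x list \<Rightarrow> 'r::comm_semiring_1"
  assumes "inj f" and "finite Y" and "Y \<inter> range f = f ` X"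
  shows "(\<Sum>ys\<in>lists_of Y d. push_tensor f x ys * h ys) = (\<Sum>vs\<in>lists_of X d. x vs * h (map f vs))"
proof -
  have "f ` X \<subseteq> Y" using assms(3) by blast
  then have sub: "map f ` lists_of X d \<subseteq> lists_of Y d"
    by (auto simp: lists_of_def image_subset_iff)
  have in_image: "ys \<in> map f ` lists_of X d"
    if "ys \<in> lists_of Y d" and "set ys \<subseteq> range f" for ys
  proof -
    obtain vs where ys: "ys = map f vs" using \<open>set ys \<subseteq> range f\<close> ex_map_if_set_subset_range by blast
    have "f ` set vs \<subseteq> Y \<inter> range f" using that(1) unfolding ys lists_of_def by auto
    then have "set vs \<subseteq> X" using assms(1,3) by (simp add: inj_image_subset_iff)
    with that ys show ?thesis by (auto simp: lists_of_def)
  qed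
  have "push_tensor f x ys = 0" if "ys \<in> lists_of Y d - map f ` lists_of X d" for ys
    using that by (meson DiffE in_image push_tensor_outside)
  then have "(\<Sum>ys\<in>lists_of Y d. push_tensor f x ys * h ys) = (\<Sum>ys\<in>map f ` lists_of X d. push_tensor f x ys * h ys)"
    by (intro sum.mono_neutral_right[OF finite_lists_of[OF assms(2)] sub]) simp_all
  also have "\<dots> = (\<Sum>vs\<in>lists_of X d. x vs * h (map f vs))"
    using assms(1) by (simp add: sum.reindex inj_on_def)
  finally show ?thesis .
qed

section \<open>Divided powers along order embeddings of bases\<close>

lemma mset_eq_if_yvec_nonzero: "yvec pr isc bs ws \<noteq> 0 \<Longrightarrow> mset ws = mset bs"
  by (auto simp: yvec_def split: if_splits)

lemma Gamma_tilde_vanishes_outside: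
  assumes "x \<in> Gamma_tilde pr isc X d" and "ws \<notin> lists_of X d"
  shows "x ws = 0"
proof -
  obtain c where x: "x = (\<lambda>w. \<Sum>bs\<in>{bs. admissible pr X d bs}. c bs * yvec pr isc bs w)"
    using assms(1) by (auto simp: Gamma_tilde_def)
  have yvec0: "yvec pr isc bs ws = 0" if "admissible pr X d bs" for bs
  proof (rule ccontr)
    assume "yvec pr isc bs ws \<noteq> 0"
    then have "set ws = set bs" and "length ws = length bs"
      by (metis mset_eq_if_yvec_nonzero set_mset_mset, metis mset_eq_if_yvec_nonzero size_mset)
    with that assms(2) show False by (simp add: admissible_def lists_of_def)
  qed
  show ?thesis unfolding x by (intro sum.neutral ballI) (simp add: yvec0)
qed

lemma inv_count_map:
  assumes "strict_mono f" and "pr' \<circ> f = pr"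
  shows "inv_count pr' (map f bs) = inv_count pr bs"
proof -
  have "k < l \<and> l < length (map f bs) \<and> pr' (map f bs ! k) \<and> pr' (map f bs ! l) \<and> map f bs ! k > map f bs ! l
    \<longleftrightarrow> k < l \<and> l < length bs \<and> pr (bs ! k) \<and> pr (bs ! l) \<and> bs ! k > bs ! l" for k l
    using assms(1) by (cases "k < l \<and> l < length bs") (auto simp: strict_mono_less comp_eq_dest_lhs[OF assms(2)])
  then show ?thesis unfolding inv_count_def by simp
qed

lemma mset_map_inj_eq: "inj f \<Longrightarrow> mset (map f xs) = mset (map f ys) \<longleftrightarrow> mset xs = mset ys"
  by (metis map_map inv_o_cancel list.map_id mset_map)

lemma yvec_map:
  fixes f :: "'x::linorder \<Rightarrow> 'y::linorder"
  assumes "strict_mono f" and "pr' \<circ> f = pr" and "isc' \<circ> f = isc"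
  shows "(yvec pr' isc' (map f bs) (map f ws) :: 'r::comm_ring_1) = yvec pr isc bs ws"
proof -
  have inj: "inj f" using assms(1) by (rule strict_mono_imp_inj_on)
  have "mset (map f ws) = mset (map f bs) \<longleftrightarrow> mset ws = mset bs"
    using inj by (rule mset_map_inj_eq)
  moreover have "(\<Prod>b\<in>{b\<in>set (map f bs). isc' b}. fact (count (mset (map f bs)) b))
      = (\<Prod>b\<in>{b\<in>set bs. isc b}. fact (count (mset bs) b) :: nat)"
  proof -
    have "{b\<in>set (map f bs). isc' b} = f ` {b\<in>set bs. isc b}"
      using comp_eq_dest_lhs[OF assms(3)] by auto
    moreover have "count (mset (map f bs)) (f b) = count (mset bs) b" for b
      using inj by (induction bs) (auto simp: inj_eq)
    ultimately show ?thesis by (simp add: prod.reindex inj_on_subset[OF inj])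
  qed
  ultimately show ?thesis
    unfolding yvec_def using inv_count_map[OF assms(1,2)] by presburger
qed

lemma admissible_set_subset: "admissible pr X d bs \<Longrightarrow> set bs \<subseteq> X"
  by (simp add: admissible_def lists_of_def)

lemma admissible_map_iff:
  assumes "inj f" and "pr' \<circ> f = pr" and "f ` X \<subseteq> Y" and "set bs \<subseteq> X"
  shows "admissible pr' Y d (map f bs) \<longleftrightarrow> admissible pr X d bs"
  using assms(1,3,4) comp_eq_dest_lhs[OF assms(2)]
  by (auto simp: admissible_def lists_of_def inj_eq; metis)

lemma Gamma_sum_at_map:
  fixes f :: "'x::linorder \<Rightarrow> 'y::linorder" and c :: "'y list \<Rightarrow> 'r::comm_ring_1"
  assumes "strict_mono f" and "pr' \<circ> f = pr" and "isc' \<circ> f = isc"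
    and "finite Y" and "f ` X \<subseteq> Y" and "set vs \<subseteq> X"
  shows "(\<Sum>bs\<in>{bs. admissible pr' Y d bs}. c bs * yvec pr' isc' bs (map f vs))
       = (\<Sum>bs\<in>{bs. admissible pr X d bs}. c (map f bs) * yvec pr isc bs vs)"
    (is "(\<Sum>bs\<in>?AY. _) = (\<Sum>bs\<in>?AX. _)")
proof -
  have inj: "inj f" using assms(1) by (rule strict_mono_imp_inj_on)
  have adm: "admissible pr' Y d (map f bs) \<longleftrightarrow> admissible pr X d bs" if "set bs \<subseteq> X" for bs
    using admissible_map_iff[OF inj assms(2) assms(5) that] .
  have sub: "map f ` ?AX \<subseteq> ?AY"
    using adm admissible_set_subset by fastforce
  have fin: "finite ?AY"
    by (rule finite_subset[OF _ finite_lists_of[OF assms(4)]]) (auto simp: admissible_def)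
  have yvec0: "yvec pr' isc' bs (map f vs) = 0" if "bs \<in> ?AY - map f ` ?AX" for bs
  proof (rule ccontr)
    assume "yvec pr' isc' bs (map f vs) \<noteq> 0"
    then have mset: "mset (map f vs) = mset bs" by (rule mset_eq_if_yvec_nonzero)
    then have "set bs \<subseteq> range f" by (metis mset_eq_setD set_map image_subset_iff rangeI)
    then obtain bs0 where bs: "bs = map f bs0" using ex_map_if_set_subset_range by blast
    have "mset bs0 = mset vs" using mset mset_map_inj_eq[OF inj] unfolding bs by metis
    then have "set bs0 \<subseteq> X" using assms(6) by (metis set_mset_mset)
    with that bs adm show False by auto
  qed
  have "(\<Sum>bs\<in>?AY. c bs * yvec pr' isc' bs (map f vs))
      = (\<Sum>bs\<in>map f ` ?AX. c bs * yvec pr' isc' bs (map f vs))"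
    by (intro sum.mono_neutral_right[OF fin sub] ballI) (simp add: yvec0)
  also have "\<dots> = (\<Sum>bs\<in>?AX. c (map f bs) * yvec pr isc bs vs)"
    using inj by (simp add: sum.reindex inj_on_def yvec_map[OF assms(1-3)])
  finally show ?thesis .
qed

definition restrict_lists :: "'x set \<Rightarrow> nat \<Rightarrow> ('x list \<Rightarrow> 'r::zero) \<Rightarrow> 'x list \<Rightarrow> 'r" where
  "restrict_lists X d t = (\<lambda>ws. if ws \<in> lists_of X d then t ws else 0)"

lemma map_in_lists_of_image_iff: "inj f \<Longrightarrow> map f vs \<in> lists_of (f ` X) d \<longleftrightarrow> vs \<in> lists_of X d"
  by (simp add: lists_of_def inj_image_subset_iff)

lemma restrict_Gamma_sum_map:
  fixes f :: "'x::linorder \<Rightarrow> 'y::linorder" and c :: "'y list \<Rightarrow> 'r::comm_ring_1"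
  assumes "strict_mono f" and "pr' \<circ> f = pr" and "isc' \<circ> f = isc"
    and "finite Y" and "f ` X \<subseteq> Y"
  shows "restrict_lists (f ` X) d (\<lambda>w. \<Sum>bs\<in>{bs. admissible pr' Y d bs}. c bs * yvec pr' isc' bs w)
       = push_tensor f (\<lambda>w. \<Sum>bs\<in>{bs. admissible pr X d bs}. c (map f bs) * yvec pr isc bs w)"
    (is "restrict_lists _ d ?t = push_tensor f ?x")
proof
  fix ws
  have inj: "inj f" using assms(1) by (rule strict_mono_imp_inj_on)
  show "restrict_lists (f ` X) d ?t ws = push_tensor f ?x ws"
  proof (cases "set ws \<subseteq> range f")
    case True
    then obtain vs where ws: "ws = map f vs" using ex_map_if_set_subset_range by blast
    show ?thesis
    proof (cases "vs \<in> lists_of X d")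
      case True
      then have "map f vs \<in> lists_of (f ` X) d" and "set vs \<subseteq> X"
        using inj by (simp add: map_in_lists_of_image_iff, simp add: lists_of_def)
      then show ?thesis using Gamma_sum_at_map[OF assms] inj by (simp add: ws restrict_lists_def)
    next
      case False
      have "?x \<in> Gamma_tilde pr isc X d" by (auto simp: Gamma_tilde_def)
      then have "?x vs = 0" using False by (rule Gamma_tilde_vanishes_outside)
      with False show ?thesis using inj
        by (simp only: ws restrict_lists_def map_in_lists_of_image_iff push_tensor_map if_False)
    qed
  next
    case False
    then have "ws \<notin> lists_of (f ` X) d" by (auto simp: lists_of_def)
    with False show ?thesis by (simp add: restrict_lists_def push_tensor_outside)
  qed
qed

lemma restrict_Gamma_tilde_image:
  fixes f :: "'x::linorder \<Rightarrow> 'y::linorder"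
  assumes "strict_mono f" and "pr' \<circ> f = pr" and "isc' \<circ> f = isc"
    and "finite Y" and "f ` X \<subseteq> Y"
  shows "restrict_lists (f ` X) d ` (Gamma_tilde pr' isc' Y d :: ('y list \<Rightarrow> 'r::comm_ring_1) set)
       = push_tensor f ` Gamma_tilde pr isc X d"
proof
  show "restrict_lists (f ` X) d ` (Gamma_tilde pr' isc' Y d :: ('y list \<Rightarrow> 'r) set)
      \<subseteq> push_tensor f ` Gamma_tilde pr isc X d"
  proof
    fix y assume "y \<in> restrict_lists (f ` X) d ` (Gamma_tilde pr' isc' Y d :: ('y list \<Rightarrow> 'r) set)"
    then obtain c :: "'y list \<Rightarrow> 'r" where
      "y = restrict_lists (f ` X) d (\<lambda>w. \<Sum>bs\<in>{bs. admissible pr' Y d bs}. c bs * yvec pr' isc' bs w)"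
      by (auto simp: Gamma_tilde_def)
    also have "\<dots> = push_tensor f (\<lambda>w. \<Sum>bs\<in>{bs. admissible pr X d bs}. c (map f bs) * yvec pr isc bs w)"
      by (rule restrict_Gamma_sum_map[OF assms])
    finally show "y \<in> push_tensor f ` Gamma_tilde pr isc X d" by (auto simp: Gamma_tilde_def)
  qed
  show "push_tensor f ` (Gamma_tilde pr isc X d :: ('x list \<Rightarrow> 'r) set)
      \<subseteq> restrict_lists (f ` X) d ` Gamma_tilde pr' isc' Y d"
  proof
    fix y assume "y \<in> push_tensor f ` (Gamma_tilde pr isc X d :: ('x list \<Rightarrow> 'r) set)"
    then obtain c :: "'x list \<Rightarrow> 'r" where
      "y = push_tensor f (\<lambda>w. \<Sum>bs\<in>{bs. admissible pr X d bs}. c bs * yvec pr isc bs w)"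
      by (auto simp: Gamma_tilde_def)
    also have "\<dots> = push_tensor f (\<lambda>w. \<Sum>bs\<in>{bs. admissible pr X d bs}.
        c (map (inv f) (map f bs)) * yvec pr isc bs w)"
      using strict_mono_imp_inj_on[OF assms(1)] by (simp add: map_idI)
    also have "\<dots> = restrict_lists (f ` X) d
        (\<lambda>w. \<Sum>bs\<in>{bs. admissible pr' Y d bs}. c (map (inv f) bs) * yvec pr' isc' bs w)"
      by (rule restrict_Gamma_sum_map[OF assms, symmetric])
    finally show "y \<in> restrict_lists (f ` X) d ` Gamma_tilde pr' isc' Y d" by (auto simp: Gamma_tilde_def)
  qed
qed

section \<open>Columns as the first column of matrices\<close>

lemma ksign_map: "length ys = length xs \<Longrightarrow> ksign p q xs (map f ys) = ksign p (q \<circ> f) xs ys"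
  unfolding ksign_def by (auto intro!: arg_cong[where f="\<lambda>S. (-1) ^ card S"])

lemma ksign_even_right:
  assumes "length ys = length xs" and "\<forall>y\<in>set ys. \<not> q y"
  shows "ksign p q xs ys = 1"
proof -
  have "{(l, k). l < k \<and> k < length xs \<and> p (xs ! k) \<and> q (ys ! l)} = {}"
    using assms by auto
  then show ?thesis unfolding ksign_def by (simp only: card.empty power_0)
qed

definition col_emb :: "'b \<times> nat \<Rightarrow> 'b \<times> nat \<times> nat" where
  "col_emb = (\<lambda>(b, r). (b, r, 1))"

lemma col_emb_apply [simp]: "col_emb (b, r) = (b, r, 1)"
  by (simp add: col_emb_def)

lemma strict_mono_col_emb: "strict_mono (col_emb :: 'b::linorder \<times> nat \<Rightarrow> _)"
  by (auto simp: strict_mono_def col_emb_def less_prod_def)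

lemma inj_col_emb: "inj col_emb"
  by (auto simp: inj_def col_emb_def)

lemma range_col_emb: "range col_emb = {w. snd (snd w) = 1}"
  by (auto simp: col_emb_def image_iff)

lemma fst_pred_comp_col_emb: "(\<lambda>(a, _, _). P a) \<circ> col_emb = (\<lambda>(a, _). P a)"
  by (auto simp: col_emb_def)

lemma oddM_comp_col_emb: "oddM B1 \<circ> col_emb = oddC B1"
  unfolding oddM_def oddC_def by (rule fst_pred_comp_col_emb)

lemma Mbasis_inter_range_col_emb:
  assumes "1 \<le> n"
  shows "Mbasis BA n \<inter> range col_emb = col_emb ` (BA \<times> {1..n})"
proof
  show "Mbasis BA n \<inter> range col_emb \<subseteq> col_emb ` (BA \<times> {1..n})"
    by (auto simp: Mbasis_def)
  show "col_emb ` (BA \<times> {1..n}) \<subseteq> Mbasis BA n \<inter> range col_emb"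
    using assms by (auto simp: Mbasis_def)
qed

(* mat_coeff m x y w is the coefficient of the matrix unit w in the product of the matrix units x and y;
   col_coeff is its analogue for a matrix unit acting on a column basis vector. *)
definition mat_coeff :: "('b \<Rightarrow> 'b \<Rightarrow> 'b \<Rightarrow> 'r::zero) \<Rightarrow> 'b \<times> nat \<times> nat \<Rightarrow> 'b \<times> nat \<times> nat \<Rightarrow> 'b \<times> nat \<times> nat \<Rightarrow> 'r" where
  "mat_coeff m x y w = (case (x, y, w) of ((a, r, s), (a', r', s'), (c, r'', s'')) \<Rightarrow>
     if s = r' \<and> r'' = r \<and> s'' = s' then m a a' c else 0)"

definition col_coeff :: "('b \<Rightarrow> 'b \<Rightarrow> 'b \<Rightarrow> 'r::zero) \<Rightarrow> 'b \<times> nat \<times> nat \<Rightarrow> 'b \<times> nat \<Rightarrow> 'b \<times> nat \<Rightarrow> 'r" where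
  "col_coeff m x v w = (case (x, v, w) of ((a, r, s), (b, t), (c, r')) \<Rightarrow>
     if s = t \<and> r' = r then m a b c else 0)"

lemma col_coeff_eq_mat_coeff: "col_coeff m x v w = mat_coeff m x (col_emb v) (col_emb w)"
  by (cases x; cases v; cases w) (simp add: col_coeff_def mat_coeff_def)

lemma mat_coeff_col_emb_outside: "w \<notin> range col_emb \<Longrightarrow> mat_coeff m x (col_emb v) w = 0"
  by (cases x; cases v; cases w) (auto simp: mat_coeff_def range_col_emb)

lemma Mtensor_mul_eq:
  "Mtensor_mul BA B1 m n d X Y ws = (if length ws = d then
     (\<Sum>xs\<in>lists_of (Mbasis BA n) d. \<Sum>ys\<in>lists_of (Mbasis BA n) d.
        X xs * Y ys * ksign (oddM B1) (oddM B1) xs ys * (\<Prod>k<d. mat_coeff m (xs ! k) (ys ! k) (ws ! k)))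
     else 0)"
  by (simp add: Mtensor_mul_def mat_coeff_def)

lemma col_act_eq:
  "col_act BA B1 m n d X Y ws = (if length ws = d then
     (\<Sum>xs\<in>lists_of (Mbasis BA n) d. \<Sum>vs\<in>lists_of (BA \<times> {1..n}) d.
        X xs * Y vs * ksign (oddM B1) (oddC B1) xs vs * (\<Prod>k<d. col_coeff m (xs ! k) (vs ! k) (ws ! k)))
     else 0)"
  by (simp add: col_act_def col_coeff_def)

lemma finite_Mbasis: "finite BA \<Longrightarrow> finite (Mbasis BA n)"
  by (rule finite_subset[of _ "BA \<times> {1..n} \<times> {1..n}"]) (auto simp: Mbasis_def)

lemma Mtensor_mul_push_col_emb:
  fixes x :: "('b \<times> nat) list \<Rightarrow> 'r::comm_ring_1"
  assumes "finite BA" and "1 \<le> n" and "length ws = d"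
  shows "Mtensor_mul BA B1 m n d t (push_tensor col_emb x) ws =
    (\<Sum>xs\<in>lists_of (Mbasis BA n) d. \<Sum>vs\<in>lists_of (BA \<times> {1..n}) d.
       t xs * x vs * ksign (oddM B1) (oddC B1) xs vs *
       (\<Prod>k<d. mat_coeff m (xs ! k) (col_emb (vs ! k)) (ws ! k)))"
proof -
  have "Mtensor_mul BA B1 m n d t (push_tensor col_emb x) ws =
    (\<Sum>xs\<in>lists_of (Mbasis BA n) d. \<Sum>ys\<in>lists_of (Mbasis BA n) d. push_tensor col_emb x ys *
       (t xs * ksign (oddM B1) (oddM B1) xs ys * (\<Prod>k<d. mat_coeff m (xs ! k) (ys ! k) (ws ! k))))"
    using assms(3) by (simp add: Mtensor_mul_eq mult_ac)
  also have "\<dots> = (\<Sum>xs\<in>lists_of (Mbasis BA n) d. \<Sum>vs\<in>lists_of (BA \<times> {1..n}) d. x vs *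
       (t xs * ksign (oddM B1) (oddM B1) xs (map col_emb vs) *
        (\<Prod>k<d. mat_coeff m (xs ! k) (map col_emb vs ! k) (ws ! k))))"
    by (simp only: sum_lists_of_push_tensor[OF inj_col_emb finite_Mbasis[OF assms(1)]
          Mbasis_inter_range_col_emb[OF assms(2)]])
  also have "\<dots> = (\<Sum>xs\<in>lists_of (Mbasis BA n) d. \<Sum>vs\<in>lists_of (BA \<times> {1..n}) d.
       t xs * x vs * ksign (oddM B1) (oddC B1) xs vs *
       (\<Prod>k<d. mat_coeff m (xs ! k) (col_emb (vs ! k)) (ws ! k)))"
    by (intro sum.cong refl prod.cong)
      (auto simp: lists_of_def ksign_map oddM_comp_col_emb mult.commute mult.left_commute)
  finally show ?thesis .
qed

lemma push_tensor_col_act: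
  fixes BA :: "'b set"
  assumes "finite BA" and "1 \<le> n"
  shows "push_tensor col_emb (col_act BA B1 m n d t x) = Mtensor_mul BA B1 m n d t (push_tensor col_emb x)"
    (is "?lhs = ?rhs")
proof
  fix ws :: "('b \<times> nat \<times> nat) list"
  consider (column) ws0 where "ws = map col_emb ws0" | (outside) "\<not> set ws \<subseteq> range col_emb"
    using ex_map_if_set_subset_range by blast
  then show "?lhs ws = ?rhs ws"
  proof cases
    case column
    show ?thesis
    proof (cases "length ws = d")
      case True
      then have "length ws0 = d" using column by simp
      have "?lhs ws = col_act BA B1 m n d t x ws0" using column by (simp add: push_tensor_map[OF inj_col_emb])
      also have "\<dots> = (\<Sum>xs\<in>lists_of (Mbasis BA n) d. \<Sum>vs\<in>lists_of (BA \<times> {1..n}) d.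
          t xs * x vs * ksign (oddM B1) (oddC B1) xs vs *
          (\<Prod>k<d. mat_coeff m (xs ! k) (col_emb (vs ! k)) (ws ! k)))"
        using \<open>length ws0 = d\<close> by (simp add: col_act_eq col_coeff_eq_mat_coeff column)
      also have "\<dots> = ?rhs ws" by (rule Mtensor_mul_push_col_emb[OF assms True, symmetric])
      finally show ?thesis .
    qed (simp add: column col_act_eq Mtensor_mul_eq push_tensor_map[OF inj_col_emb])
  next
    case outside
    then obtain l where l: "l < length ws" "ws ! l \<notin> range col_emb"
      by (metis in_set_conv_nth subsetI)
    have "?rhs ws = 0"
    proof (cases "length ws = d")
      case True
      have "(\<Prod>k<d. mat_coeff m (xs ! k) (col_emb (vs ! k)) (ws ! k)) = 0" for xs vs
        using l True by (intro prod_zero) (auto intro!: bexI[of _ l] mat_coeff_col_emb_outside)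
      then show ?thesis unfolding Mtensor_mul_push_col_emb[OF assms True] by simp
    qed (simp add: Mtensor_mul_eq)
    with outside show ?thesis by (simp add: push_tensor_outside)
  qed
qed

section \<open>Right multiplication by \<eta>\<close>

definition xi11 :: "('b \<Rightarrow> 'r::zero) \<Rightarrow> 'b \<times> nat \<times> nat \<Rightarrow> 'r" where
  "xi11 e = (\<lambda>(b, r, s). if r = 1 \<and> s = 1 then e b else 0)"

lemma eta_e_eq: "length ys = d \<Longrightarrow> eta_e e d ys = (\<Prod>k<d. xi11 e (ys ! k))"
  by (simp add: eta_e_def xi11_def)

lemma eta_e_mult_ksign:
  fixes e :: "'b \<Rightarrow> 'r::comm_ring_1"
  assumes "\<forall>c\<in>B1. e c = 0" and "length ys = length xs"
  shows "eta_e e d ys * ksign p (oddM B1) xs ys = eta_e e d ys"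
proof (cases "eta_e e d ys = 0")
  case False
  then have len: "length ys = d" by (rule contrapos_np) (simp add: eta_e_def)
  have even: "\<forall>y\<in>set ys. \<not> oddM B1 y"
  proof
    fix y assume "y \<in> set ys"
    then obtain k where k: "k < d" "y = ys ! k" using len by (metis in_set_conv_nth)
    then have "xi11 e y \<noteq> 0"
      using False len by (metis eta_e_eq finite_lessThan lessThan_iff prod_zero)
    moreover obtain b r s where "y = (b, r, s)" by (cases y)
    ultimately show "\<not> oddM B1 y" using assms(1) by (auto simp: xi11_def oddM_def split: if_splits)
  qed
  have "ksign p (oddM B1) xs ys = (1::'r)" by (rule ksign_even_right[OF assms(2) even])
  then show ?thesis by simp
qed simp

lemma amul_bvec_left:
  assumes "finite BA" and "a \<in> BA"
  shows "amul BA m (bvec a) e c = (\<Sum>b\<in>BA. e b * m a b c)"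
proof -
  have "amul BA m (bvec a) e c = (\<Sum>a'\<in>BA. if a' = a then (\<Sum>b\<in>BA. e b * m a' b c) else 0)"
    unfolding amul_def bvec_def by (rule sum.cong) auto
  also have "\<dots> = (\<Sum>b\<in>BA. e b * m a b c)" using assms by (simp add: sum.delta)
  finally show ?thesis .
qed

lemma sum_xi11_mat_coeff:
  assumes "finite BA" and "1 \<le> n" and "a \<in> BA"
  shows "(\<Sum>y\<in>Mbasis BA n. xi11 e y * mat_coeff m (a, r, s) y (c, r', s'))
       = (if s = 1 \<and> r' = r \<and> s' = 1 then amul BA m (bvec a) e c else 0)"
proof -
  let ?col1 = "(\<lambda>b. (b, 1::nat, 1::nat)) ` BA"
  have sub: "?col1 \<subseteq> Mbasis BA n" using assms(2) by (auto simp: Mbasis_def)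
  have "(\<Sum>y\<in>Mbasis BA n. xi11 e y * mat_coeff m (a, r, s) y (c, r', s'))
      = (\<Sum>y\<in>?col1. xi11 e y * mat_coeff m (a, r, s) y (c, r', s'))"
    by (intro sum.mono_neutral_right[OF finite_Mbasis[OF assms(1)] sub])
      (auto simp: xi11_def Mbasis_def)
  also have "\<dots> = (\<Sum>b\<in>BA. e b * (if s = 1 \<and> r' = r \<and> s' = 1 then m a b c else 0))"
    by (simp add: sum.reindex inj_on_def xi11_def mat_coeff_def)
  also have "\<dots> = (if s = 1 \<and> r' = r \<and> s' = 1 then amul BA m (bvec a) e c else 0)"
    using assms(1,3) by (cases "s = 1 \<and> r' = r \<and> s' = 1") (auto simp: amul_bvec_left)
  finally show ?thesis .
qed

lemma col_emb_mem_ColE_basis: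
  "(c, r', s') \<in> col_emb ` ColE_basis BA m e n \<longleftrightarrow>
     s' = 1 \<and> c \<in> BA \<and> amul BA m (bvec c) e = bvec c \<and> r' \<in> {1..n}"
  by (auto simp: ColE_basis_def image_iff)

lemma bvec_nonzero: "bvec a \<noteq> (\<lambda>_. 0 :: 'r::zero_neq_one)"
  by (auto simp: bvec_def fun_eq_iff)

lemma sum_xi11_mat_coeff_basis:
  assumes "finite BA" and "1 \<le> n" and "x \<in> Mbasis BA n"
    and "\<forall>b\<in>BA. amul BA m (bvec b) e = bvec b \<or> amul BA m (bvec b) e = (\<lambda>_. 0)"
  shows "(\<Sum>y\<in>Mbasis BA n. xi11 e y * mat_coeff m x y w) = of_bool (x = w \<and> w \<in> col_emb ` ColE_basis BA m e n)"
proof -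
  obtain a r s where x: "x = (a, r, s)" by (cases x) auto
  obtain c r' s' where w: "w = (c, r', s')" by (cases w) auto
  have a: "a \<in> BA" "r \<in> {1..n}" using assms(3) x by (auto simp: Mbasis_def)
  consider "amul BA m (bvec a) e = bvec a" | "amul BA m (bvec a) e = (\<lambda>_. 0)"
    using assms(4) a(1) by blast
  then show ?thesis
  proof cases
    case 1
    then show ?thesis
      using a by (auto simp: x w sum_xi11_mat_coeff[OF assms(1,2) a(1)] col_emb_mem_ColE_basis bvec_def)
  next
    case 2
    then show ?thesis
      using a bvec_nonzero[of a]
      by (auto simp: x w sum_xi11_mat_coeff[OF assms(1,2) a(1)] col_emb_mem_ColE_basis)
  qed
qed

lemma Mtensor_mul_eta_e_inner_sum:
  fixes BA :: "'b set" and m :: "'b \<Rightarrow> 'b \<Rightarrow> 'b \<Rightarrow> 'r::comm_ring_1"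
  assumes "finite BA" and "1 \<le> n" and "\<forall>c\<in>B1. e c = 0"
    and "\<forall>b\<in>BA. amul BA m (bvec b) e = bvec b \<or> amul BA m (bvec b) e = (\<lambda>_. 0)"
    and xs: "xs \<in> lists_of (Mbasis BA n) d" and len: "length ws = d"
  shows "(\<Sum>ys\<in>lists_of (Mbasis BA n) d. t xs * eta_e e d ys * ksign (oddM B1) (oddM B1) xs ys *
          (\<Prod>k<d. mat_coeff m (xs ! k) (ys ! k) (ws ! k)))
       = t xs * of_bool (xs = ws \<and> set ws \<subseteq> col_emb ` ColE_basis BA m e n)"
    (is "_ = t xs * of_bool (_ \<and> set ws \<subseteq> ?Z)")
proof -
  let ?M = "Mbasis BA n"
  have summand: "t xs * eta_e e d ys * ksign (oddM B1) (oddM B1) xs ys *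
      (\<Prod>k<d. mat_coeff m (xs ! k) (ys ! k) (ws ! k))
    = t xs * (\<Prod>k<d. xi11 e (ys ! k) * mat_coeff m (xs ! k) (ys ! k) (ws ! k))"
    if ys: "ys \<in> lists_of ?M d" for ys
  proof -
    have "length ys = length xs" "length ys = d" using xs ys by (simp_all add: lists_of_def)
    then show ?thesis
      using eta_e_mult_ksign[OF assms(3), of ys xs d "oddM B1"]
      by (simp add: eta_e_eq prod.distrib mult.assoc)
  qed
  have "(\<Sum>ys\<in>lists_of ?M d. t xs * eta_e e d ys * ksign (oddM B1) (oddM B1) xs ys *
      (\<Prod>k<d. mat_coeff m (xs ! k) (ys ! k) (ws ! k)))
    = t xs * (\<Sum>ys\<in>lists_of ?M d. \<Prod>k<d. xi11 e (ys ! k) * mat_coeff m (xs ! k) (ys ! k) (ws ! k))"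
    by (simp add: summand sum_distrib_left)
  also have "\<dots> = t xs * (\<Prod>k<d. \<Sum>y\<in>?M. xi11 e y * mat_coeff m (xs ! k) y (ws ! k))"
    using sum_lists_of_prod[OF finite_Mbasis[OF assms(1)],
        where h = "\<lambda>k y. xi11 e y * mat_coeff m (xs ! k) y (ws ! k)"] by simp
  also have "\<dots> = t xs * (\<Prod>k<d. of_bool (xs ! k = ws ! k \<and> ws ! k \<in> ?Z))"
  proof (intro arg_cong[where f = "(*) (t xs)"] prod.cong refl)
    fix k assume "k \<in> {..<d}"
    then have "xs ! k \<in> ?M" using xs by (auto simp: lists_of_def)
    then show "(\<Sum>y\<in>?M. xi11 e y * mat_coeff m (xs ! k) y (ws ! k)) = of_bool (xs ! k = ws ! k \<and> ws ! k \<in> ?Z)"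
      by (rule sum_xi11_mat_coeff_basis[OF assms(1,2) _ assms(4)])
  qed
  also have "\<dots> = t xs * of_bool (xs = ws \<and> set ws \<subseteq> ?Z)"
    using xs len by (simp add: prod_of_bool lists_of_def list_eq_iff_nth_eq set_conv_nth) blast
  finally show ?thesis .
qed

lemma Mtensor_mul_eta_e:
  fixes BA :: "'b set" and m :: "'b \<Rightarrow> 'b \<Rightarrow> 'b \<Rightarrow> 'r::comm_ring_1"
  assumes "finite BA" and "1 \<le> n" and "\<forall>c\<in>B1. e c = 0"
    and "\<forall>b\<in>BA. amul BA m (bvec b) e = bvec b \<or> amul BA m (bvec b) e = (\<lambda>_. 0)"
  shows "Mtensor_mul BA B1 m n d t (eta_e e d) = restrict_lists (col_emb ` ColE_basis BA m e n) d t"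
    (is "?lhs = restrict_lists ?Z d t")
proof
  fix ws :: "('b \<times> nat \<times> nat) list"
  let ?M = "Mbasis BA n"
  show "?lhs ws = restrict_lists ?Z d t ws"
  proof (cases "length ws = d")
    case len: True
    have "?lhs ws = (\<Sum>xs\<in>lists_of ?M d. t xs * of_bool (xs = ws \<and> set ws \<subseteq> ?Z))"
      using len Mtensor_mul_eta_e_inner_sum[OF assms _ len] by (simp add: Mtensor_mul_eq)
    also have "\<dots> = restrict_lists ?Z d t ws"
    proof (cases "set ws \<subseteq> ?Z")
      case True
      have "?Z \<subseteq> ?M" using assms(2) by (auto simp: ColE_basis_def Mbasis_def)
      with True len have ws: "ws \<in> lists_of ?M d" and "ws \<in> lists_of ?Z d"
        by (auto simp: lists_of_def)
      have "(\<Sum>xs\<in>lists_of ?M d. t xs * of_bool (xs = ws \<and> set ws \<subseteq> ?Z))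
          = (\<Sum>xs\<in>lists_of ?M d. if xs = ws then t xs else 0)"
        using True by (intro sum.cong) auto
      also have "\<dots> = t ws"
        using ws by (simp add: sum.delta finite_lists_of[OF finite_Mbasis[OF assms(1)]])
      finally show ?thesis using \<open>ws \<in> lists_of ?Z d\<close> by (simp add: restrict_lists_def)
    qed (simp add: restrict_lists_def lists_of_def)
    finally show ?thesis .
  qed (simp add: Mtensor_mul_eq restrict_lists_def lists_of_def)
qed

theorem lemma4p12:
  fixes Ba Bc B1 :: "'b::linorder set"
    and m :: "'b \<Rightarrow> 'b \<Rightarrow> 'b \<Rightarrow> 'r::{idom, ring_char_0}"
    and one e :: "'b \<Rightarrow> 'r"
    and n d :: nat
  assumes "principal_ideal_ring TYPE('r)"
    and "calibrated_superalgebra Ba Bc B1 m one"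
    and "n \<ge> 1"
    and "\<forall>c. c \<notin> Ba \<longrightarrow> e c = 0"
    and "amul (Ba \<union> Bc \<union> B1) m e e = e"
    and "\<forall>b\<in>Ba \<union> Bc \<union> B1. amul (Ba \<union> Bc \<union> B1) m (bvec b) e = bvec b
                          \<or> amul (Ba \<union> Bc \<union> B1) m (bvec b) e = (\<lambda>_. 0)"
  shows "\<exists>f. even_iso_Tmod (oddM B1) (oddC B1) (TA Ba Bc B1 n d)
              (col_act (Ba \<union> Bc \<union> B1) B1 m n d) (Mtensor_mul (Ba \<union> Bc \<union> B1) B1 m n d)
              (GammaColE Ba Bc B1 m e n d)
              {Mtensor_mul (Ba \<union> Bc \<union> B1) B1 m n d t (eta_e e d) | t. t \<in> TA Ba Bc B1 n d}
              f"
proof -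
  let ?BA = "Ba \<union> Bc \<union> B1"
  have fin: "finite ?BA" and "Ba \<inter> B1 = {}"
    using assms(2) by (auto simp: calibrated_superalgebra_def)
  with assms(4) have even: "\<forall>c\<in>B1. e c = 0" by blast
  have "col_emb ` ColE_basis ?BA m e n \<subseteq> Mbasis ?BA n"
    using assms(3) by (auto simp: ColE_basis_def Mbasis_def)
  from restrict_Gamma_tilde_image[OF strict_mono_col_emb oddM_comp_col_emb fst_pred_comp_col_emb
      finite_Mbasis[OF fin] this]
  have image: "{Mtensor_mul ?BA B1 m n d t (eta_e e d) | t. t \<in> TA Ba Bc B1 n d}
      = push_tensor col_emb ` GammaColE Ba Bc B1 m e n d"
    unfolding Mtensor_mul_eta_e[OF fin assms(3) even assms(6)] TA_def GammaColE_def
    by (simp add: setcompr_eq_image)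
  have "bij_betw (push_tensor col_emb) (GammaColE Ba Bc B1 m e n d)
      {Mtensor_mul ?BA B1 m n d t (eta_e e d) | t. t \<in> TA Ba Bc B1 n d}"
    unfolding image bij_betw_def by (simp add: inj_on_subset[OF inj_push_tensor[OF inj_col_emb] subset_UNIV])
  then show ?thesis
    unfolding even_iso_Tmod_def
    by (intro exI[of _ "push_tensor col_emb"])
      (simp add: push_tensor_add push_tensor_smult push_tensor_col_act[OF fin assms(3)]
        homog_push_tensor[OF _ oddM_comp_col_emb inj_col_emb])
qed

end
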